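(* Let $k$ be a field of characteristic $0$, $A=kQ_A/I_A$ a radical square zero algebra, and $B$ the algebra obtained by gluing two distinct non-isolated vertices $e_1,e_n$ lying in the same block of $A$. If $Z_{spp}=0$, then there is a Lie algebra isomorphism $\mathrm{HH}^1(B)\cong\mathrm{HH}^1(A)\times k$.
   Context: A radical square zero algebra is $A=kQ_A/I_A$ with $I_A$ generated by all paths of length 2 of the finite quiver $Q_A$. Gluing: $B\subseteq A$ generated by $f_1=e_1+e_n$, the other vertex idempotents $f_i=e_i$ and all arrows; $B\cong kQ_B/I_B$ with $Q_B$ obtained by identifying $e_1,e_n$ to $f_1$ (arrow $\alpha\mapsto\alpha^*$, path $p\mapsto p^*$, $e_1^*=e_n^*=f_1$) and $I_B$ generated by all length-2 paths of $Q_B$. Blocks of $A$ correspond to connected components of $Q_A$. For path sets $X,Y$, $k(X\|Y)$ has basis the pairs $x\|y$ of parallel paths. $\delta^1_B:k((Q_B)_1\|\mathcal B_B)\to k((Q_B)_2\|\mathcal B_B)$ ($\mathcal B_B$ = vertices and arrows of $Q_B$), $a\|\gamma\mapsto\sum_{r}r\|r^{a\|\gamma}$ over length-2 paths $r$, where $r^{a\|\gamma}$ is the sum over occurrences of $a$ in $r$ of the path obtained by replacing that occurrence by $\gamma$, keeping only paths in $\mathcal B_B$. A special pair is $(\alpha,p)$ with $\alpha$ an arrow of $Q_A$ starting or ending at $e_1$ or $e_n$, $p$ a vertex or arrow of $Q_A$, $\alpha^*$ parallel to $p^*$ in $Q_B$ but $\alpha$ not parallel to $p$ in $Q_A$; $Z_{spp}$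 is the intersection of $\mathrm{Ker}\,\delta^1_B$ with the span of the $\alpha^*\|p^*$ over special pairs. *)

theory Defs
  imports Main
begin

(* A finite quiver is given by a vertex set V, an arrow set E and source / target maps s t.
   A path is a pair (start vertex, list of arrows); the trivial path at v is (v, []). *)

type_synonym ('v,'a) path = "'v \<times> 'a list"

definition path_tgt :: "('a \<Rightarrow> 'v) \<Rightarrow> ('v,'a) path \<Rightarrow> 'v" where
  "path_tgt t p = (if snd p = [] then fst p else t (last (snd p)))"

definition parallel :: "('a \<Rightarrow> 'v) \<Rightarrow> ('v,'a) path \<Rightarrow> ('v,'a) path \<Rightarrow> bool" where
  "parallel t p q \<longleftrightarrow> fst p = fst q \<and> path_tgt t p = path_tgt t q"

definition is_quiver :: "'v set \<Rightarrow> 'a set \<Rightarrow> ('a \<Rightarrow> 'v) \<Rightarrow> ('a \<Rightarrow> 'v) \<Rightarrow> bool" where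
  "is_quiver V E s t \<longleftrightarrow> finite V \<and> finite E \<and> (\<forall>\<alpha>\<in>E. s \<alpha> \<in> V \<and> t \<alpha> \<in> V)"

definition arr_path :: "('a \<Rightarrow> 'v) \<Rightarrow> 'a \<Rightarrow> ('v,'a) path" where
  "arr_path s \<alpha> = (s \<alpha>, [\<alpha>])"

definition rsz_basis :: "'v set \<Rightarrow> 'a set \<Rightarrow> ('a \<Rightarrow> 'v) \<Rightarrow> ('v,'a) path set" where
  "rsz_basis V E s = (\<lambda>v. (v, [])) ` V \<union> arr_path s ` E"

definition arrows_paths :: "'a set \<Rightarrow> ('a \<Rightarrow> 'v) \<Rightarrow> ('v,'a) path set" where
  "arrows_paths E s = arr_path s ` E"

definition paths2 :: "'a set \<Rightarrow> ('a \<Rightarrow> 'v) \<Rightarrow> ('a \<Rightarrow> 'v) \<Rightarrow> ('v,'a) path set" where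
  "paths2 E s t = {(s \<beta>1, [\<beta>1, \<beta>2]) | \<beta>1 \<beta>2. \<beta>1 \<in> E \<and> \<beta>2 \<in> E \<and> t \<beta>1 = s \<beta>2}"

definition rsz_carrier :: "'v set \<Rightarrow> 'a set \<Rightarrow> ('a \<Rightarrow> 'v) \<Rightarrow> (('v,'a) path \<Rightarrow> 'k::field) set" where
  "rsz_carrier V E s = {x. \<forall>c. c \<notin> rsz_basis V E s \<longrightarrow> x c = 0}"

(* multiplication: concatenation of composable basis paths, paths of length 2 are zero *)
definition rsz_mult :: "'v set \<Rightarrow> 'a set \<Rightarrow> ('a \<Rightarrow> 'v) \<Rightarrow> ('a \<Rightarrow> 'v) \<Rightarrow>
    (('v,'a) path \<Rightarrow> 'k::field) \<Rightarrow> (('v,'a) path \<Rightarrow> 'k) \<Rightarrow> (('v,'a) path \<Rightarrow> 'k)" where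
  "rsz_mult V E s t x y = (\<lambda>c. \<Sum>p\<in>rsz_basis V E s. \<Sum>q\<in>rsz_basis V E s.
      if path_tgt t p = fst q \<and> length (snd p @ snd q) \<le> 1 \<and> (fst p, snd p @ snd q) = c
      then x p * y q else 0)"

definition vadd :: "('b \<Rightarrow> 'k::field) \<Rightarrow> ('b \<Rightarrow> 'k) \<Rightarrow> ('b \<Rightarrow> 'k)" where
  "vadd x y = (\<lambda>c. x c + y c)"

definition vsmult :: "'k::field \<Rightarrow> ('b \<Rightarrow> 'k) \<Rightarrow> ('b \<Rightarrow> 'k)" where
  "vsmult a x = (\<lambda>c. a * x c)"

definition Der :: "'v set \<Rightarrow> 'a set \<Rightarrow> ('a \<Rightarrow> 'v) \<Rightarrow> ('a \<Rightarrow> 'v) \<Rightarrow> 'k::field itself \<Rightarrow>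
    ((('v,'a) path \<Rightarrow> 'k) \<Rightarrow> (('v,'a) path \<Rightarrow> 'k)) set" where
  "Der V E s t K = {D. (\<forall>x. x \<notin> rsz_carrier V E s \<longrightarrow> D x = (\<lambda>_. 0))
     \<and> (\<forall>x\<in>rsz_carrier V E s. D x \<in> rsz_carrier V E s)
     \<and> (\<forall>x\<in>rsz_carrier V E s. \<forall>y\<in>rsz_carrier V E s. D (vadd x y) = vadd (D x) (D y))
     \<and> (\<forall>a. \<forall>x\<in>rsz_carrier V E s. D (vsmult a x) = vsmult a (D x))
     \<and> (\<forall>x\<in>rsz_carrier V E s. \<forall>y\<in>rsz_carrier V E s.
          D (rsz_mult V E s t x y) = vadd (rsz_mult V E s t (D x) y) (rsz_mult V E s t x (D y)))}"

definition Inn :: "'v set \<Rightarrow> 'a set \<Rightarrow> ('a \<Rightarrow> 'v) \<Rightarrow> ('a \<Rightarrow> 'v) \<Rightarrow> 'k::field itself \<Rightarrow>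
    ((('v,'a) path \<Rightarrow> 'k) \<Rightarrow> (('v,'a) path \<Rightarrow> 'k)) set" where
  "Inn V E s t K = {D. \<exists>a\<in>rsz_carrier V E s. D = (\<lambda>x. if x \<in> rsz_carrier V E s
       then (\<lambda>c. rsz_mult V E s t a x c - rsz_mult V E s t x a c) else (\<lambda>_. 0))}"

definition dadd :: "(('b \<Rightarrow> 'k::field) \<Rightarrow> ('b \<Rightarrow> 'k)) \<Rightarrow> (('b \<Rightarrow> 'k) \<Rightarrow> ('b \<Rightarrow> 'k)) \<Rightarrow> (('b \<Rightarrow> 'k) \<Rightarrow> ('b \<Rightarrow> 'k))" where
  "dadd D D' = (\<lambda>x c. D x c + D' x c)"

definition dsub :: "(('b \<Rightarrow> 'k::field) \<Rightarrow> ('b \<Rightarrow> 'k)) \<Rightarrow> (('b \<Rightarrow> 'k) \<Rightarrow> ('b \<Rightarrow> 'k)) \<Rightarrow> (('b \<Rightarrow> 'k) \<Rightarrow> ('b \<Rightarrow> 'k))" where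
  "dsub D D' = (\<lambda>x c. D x c - D' x c)"

definition dsmult :: "'k::field \<Rightarrow> (('b \<Rightarrow> 'k) \<Rightarrow> ('b \<Rightarrow> 'k)) \<Rightarrow> (('b \<Rightarrow> 'k) \<Rightarrow> ('b \<Rightarrow> 'k))" where
  "dsmult a D = (\<lambda>x c. a * D x c)"

definition dbracket :: "(('b \<Rightarrow> 'k::field) \<Rightarrow> ('b \<Rightarrow> 'k)) \<Rightarrow> (('b \<Rightarrow> 'k) \<Rightarrow> ('b \<Rightarrow> 'k)) \<Rightarrow> (('b \<Rightarrow> 'k) \<Rightarrow> ('b \<Rightarrow> 'k))" where
  "dbracket D D' = (\<lambda>x c. D (D' x) c - D' (D x) c)"

(* HH^1(B) \<cong> HH^1(A) \<times> k as Lie algebras (k the one-dimensional, hence abelian, Lie algebra).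
   HH^1(X) = Der(X)/Inn(X) with bracket induced by the commutator.  A Lie algebra isomorphism
   between the quotients is given by a k-linear lift  (\<phi>,\<psi>) : Der(B) \<rightarrow> Der(A) \<times> k  which
   - induces a well-defined injective map on quotients:  (\<phi> D, \<psi> D) \<in> Inn(A) \<times> 0  iff  D \<in> Inn(B),
   - induces a surjective map on quotients,
   - is compatible with brackets modulo Inn(A) \<times> 0 (bracket on the product: ([E,E'], 0)). *)
definition HH1_iso_times_field ::
  "'v set \<Rightarrow> 'a set \<Rightarrow> ('a \<Rightarrow> 'v) \<Rightarrow> ('a \<Rightarrow> 'v) \<Rightarrow>
   'w set \<Rightarrow> 'b set \<Rightarrow> ('b \<Rightarrow> 'w) \<Rightarrow> ('b \<Rightarrow> 'w) \<Rightarrow> 'k::field itself \<Rightarrow> bool" where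
  "HH1_iso_times_field VB EB sB tB VA EA sA tA K \<longleftrightarrow>
   (\<exists>(\<phi> :: ((('v,'a) path \<Rightarrow> 'k) \<Rightarrow> (('v,'a) path \<Rightarrow> 'k)) \<Rightarrow> ((('w,'b) path \<Rightarrow> 'k) \<Rightarrow> (('w,'b) path \<Rightarrow> 'k)))
      (\<psi> :: ((('v,'a) path \<Rightarrow> 'k) \<Rightarrow> (('v,'a) path \<Rightarrow> 'k)) \<Rightarrow> 'k).
     (\<forall>D\<in>Der VB EB sB tB K. \<phi> D \<in> Der VA EA sA tA K)
   \<and> (\<forall>D\<in>Der VB EB sB tB K. \<forall>D'\<in>Der VB EB sB tB K.
        \<phi> (dadd D D') = dadd (\<phi> D) (\<phi> D') \<and> \<psi> (dadd D D') = \<psi> D + \<psi> D')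
   \<and> (\<forall>a. \<forall>D\<in>Der VB EB sB tB K. \<phi> (dsmult a D) = dsmult a (\<phi> D) \<and> \<psi> (dsmult a D) = a * \<psi> D)
   \<and> (\<forall>D\<in>Der VB EB sB tB K. (\<phi> D \<in> Inn VA EA sA tA K \<and> \<psi> D = 0) \<longleftrightarrow> D \<in> Inn VB EB sB tB K)
   \<and> (\<forall>E\<in>Der VA EA sA tA K. \<forall>c. \<exists>D\<in>Der VB EB sB tB K.
        dsub (\<phi> D) E \<in> Inn VA EA sA tA K \<and> \<psi> D = c)
   \<and> (\<forall>D\<in>Der VB EB sB tB K. \<forall>D'\<in>Der VB EB sB tB K.
        dsub (\<phi> (dbracket D D')) (dbracket (\<phi> D) (\<phi> D')) \<in> Inn VA EA sA tA K
        \<and> \<psi> (dbracket D D') = 0))"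

definition glue :: "'v \<Rightarrow> 'v \<Rightarrow> 'v \<Rightarrow> 'v" where
  "glue v1 vn v = (if v = vn then v1 else v)"

definition glue_path :: "'v \<Rightarrow> 'v \<Rightarrow> ('v,'a) path \<Rightarrow> ('v,'a) path" where
  "glue_path v1 vn p = (glue v1 vn (fst p), snd p)"

definition non_isolated :: "'a set \<Rightarrow> ('a \<Rightarrow> 'v) \<Rightarrow> ('a \<Rightarrow> 'v) \<Rightarrow> 'v \<Rightarrow> bool" where
  "non_isolated E s t v \<longleftrightarrow> (\<exists>\<alpha>\<in>E. s \<alpha> = v \<or> t \<alpha> = v)"

(* same connected component of the underlying graph of Q, i.e. same block of kQ/I *)
definition same_block :: "'a set \<Rightarrow> ('a \<Rightarrow> 'v) \<Rightarrow> ('a \<Rightarrow> 'v) \<Rightarrow> 'v \<Rightarrow> 'v \<Rightarrow> bool" where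
  "same_block E s t u v \<longleftrightarrow>
     (u, v) \<in> ({(s \<alpha>, t \<alpha>) | \<alpha>. \<alpha> \<in> E} \<union> {(t \<alpha>, s \<alpha>) | \<alpha>. \<alpha> \<in> E})\<^sup>*"

(* coefficient of the path p in r^{a||\<gamma>}: number of occurrences of the arrow of a in r whose
   replacement by \<gamma> yields p, only paths in the basis \<B> (vertices and arrows) being kept *)
definition subst_coeff :: "'v set \<Rightarrow> 'a set \<Rightarrow> ('a \<Rightarrow> 'v) \<Rightarrow>
    ('v,'a) path \<Rightarrow> ('v,'a) path \<Rightarrow> ('v,'a) path \<Rightarrow> ('v,'a) path \<Rightarrow> nat" where
  "subst_coeff V E s r a \<gamma> p = card {i. i < length (snd r) \<and> snd r ! i = hd (snd a)
      \<and> (fst r, take i (snd r) @ snd \<gamma> @ drop (Suc i) (snd r)) = p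
      \<and> p \<in> rsz_basis V E s}"

definition par_arrows_basis :: "'v set \<Rightarrow> 'a set \<Rightarrow> ('a \<Rightarrow> 'v) \<Rightarrow> ('a \<Rightarrow> 'v) \<Rightarrow>
    (('v,'a) path \<times> ('v,'a) path) set" where
  "par_arrows_basis V E s t = {(a, \<gamma>). a \<in> arrows_paths E s \<and> \<gamma> \<in> rsz_basis V E s \<and> parallel t a \<gamma>}"

(* \<delta>^1 applied to an element f of k(Q_1||\<B>) (coefficient function), coordinate r||p *)
definition delta1 :: "'v set \<Rightarrow> 'a set \<Rightarrow> ('a \<Rightarrow> 'v) \<Rightarrow> ('a \<Rightarrow> 'v) \<Rightarrow>
    (('v,'a) path \<times> ('v,'a) path \<Rightarrow> 'k::field) \<Rightarrow> (('v,'a) path \<times> ('v,'a) path \<Rightarrow> 'k)" where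
  "delta1 V E s t f = (\<lambda>(r, p). \<Sum>(a, \<gamma>)\<in>par_arrows_basis V E s t.
       f (a, \<gamma>) * of_nat (subst_coeff V E s r a \<gamma> p))"

definition special_pair :: "'v set \<Rightarrow> 'a set \<Rightarrow> ('a \<Rightarrow> 'v) \<Rightarrow> ('a \<Rightarrow> 'v) \<Rightarrow> 'v \<Rightarrow> 'v \<Rightarrow>
    'a \<Rightarrow> ('v,'a) path \<Rightarrow> bool" where
  "special_pair V E s t v1 vn \<alpha> p \<longleftrightarrow>
     \<alpha> \<in> E \<and> (s \<alpha> \<in> {v1, vn} \<or> t \<alpha> \<in> {v1, vn}) \<and> p \<in> rsz_basis V E s
     \<and> parallel (glue v1 vn \<circ> t) (glue_path v1 vn (arr_path s \<alpha>)) (glue_path v1 vn p)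
     \<and> \<not> parallel t (arr_path s \<alpha>) p"

(* Z_spp = 0: every element of the span of the \<alpha>^*||p^* (special pairs) lying in Ker \<delta>^1_B is zero *)
definition Zspp_zero :: "'k::field itself \<Rightarrow> 'v set \<Rightarrow> 'a set \<Rightarrow> ('a \<Rightarrow> 'v) \<Rightarrow> ('a \<Rightarrow> 'v) \<Rightarrow> 'v \<Rightarrow> 'v \<Rightarrow> bool" where
  "Zspp_zero K V E s t v1 vn \<longleftrightarrow>
    (let VB = V - {vn}; sB = glue v1 vn \<circ> s; tB = glue v1 vn \<circ> t;
         SPP = {(glue_path v1 vn (arr_path s \<alpha>), glue_path v1 vn p) | \<alpha> p. special_pair V E s t v1 vn \<alpha> p}
     in \<forall>f :: ('v,'a) path \<times> ('v,'a) path \<Rightarrow> 'k.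
          (\<forall>x. x \<notin> SPP \<longrightarrow> f x = 0)
        \<longrightarrow> (\<forall>r\<in>paths2 E sB tB. \<forall>p\<in>rsz_basis VB E sB. delta1 VB E sB tB f (r, p) = 0)
        \<longrightarrow> (\<forall>x. f x = 0))"

end

theory Submission
  imports Defs
begin

(* A derivation D of a radical square zero algebra kQ/I is determined, up to an inner derivation,
   by its arrow block N, where D(\<alpha>) = \<Sum>\<beta> N \<alpha> \<beta> \<beta>. In characteristic 0, N is supported on
   pairs of parallel arrows, every such matrix is the arrow block of a derivation, and the inner
   derivations have the diagonal blocks l(s \<alpha>) - l(t \<alpha>) for vertex weights l.
   Gluing v1 and vn keeps the arrows, and Z_spp = 0 says that it creates no new parallel pairs of
   arrows, so A and B have the same arrow blocks; only the inner ones differ, those of B coming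
   from weights with l(v1) = l(vn). As v1 and vn lie in one block, there is a flow w from v1 to vn
   that is constant on parallel classes; the functional N \<mapsto> \<Sum>\<alpha> w \<alpha> N \<alpha> \<alpha> then equals
   l(v1) - l(vn) on the block of an inner derivation and vanishes on commutators. Hence
   D \<mapsto> (the derivation of A with arrow block N, \<Sum>\<alpha> w \<alpha> N \<alpha> \<alpha>) induces HH^1(B) \<cong> HH^1(A) \<times> k. *)

type_synonym ('v,'a,'k) elem = "('v,'a) path \<Rightarrow> 'k"
type_synonym ('v,'a,'k) endo = "('v,'a,'k) elem \<Rightarrow> ('v,'a,'k) elem"

definition unit_at :: "'p \<Rightarrow> ('p \<Rightarrow> 'k::zero_neq_one)" where
  "unit_at p = (\<lambda>c. if c = p then 1 else 0)"

definition vsubspace :: "('p \<Rightarrow> 'k::field) set \<Rightarrow> bool" where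
  "vsubspace C \<longleftrightarrow> (\<lambda>_. 0) \<in> C \<and> (\<forall>x\<in>C. \<forall>y\<in>C. vadd x y \<in> C) \<and> (\<forall>a. \<forall>x\<in>C. vsmult a x \<in> C)"

definition vlinear_on :: "('p \<Rightarrow> 'k::field) set \<Rightarrow> (('p \<Rightarrow> 'k) \<Rightarrow> ('p \<Rightarrow> 'k)) \<Rightarrow> bool" where
  "vlinear_on C F \<longleftrightarrow> (\<forall>x\<in>C. \<forall>y\<in>C. F (vadd x y) = vadd (F x) (F y))
     \<and> (\<forall>a. \<forall>x\<in>C. F (vsmult a x) = vsmult a (F x))"

lemma vlinear_on_zero:
  assumes "vlinear_on C F" "vsubspace C"
  shows "F (\<lambda>_. 0) = (\<lambda>_. 0)"
proof -
  have zero: "(\<lambda>_. 0) \<in> C" using assms(2) unfolding vsubspace_def by auto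
  have "F (\<lambda>_. 0) = F (vsmult 0 (\<lambda>_. 0))" by (simp add: vsmult_def)
  also have "\<dots> = vsmult 0 (F (\<lambda>_. 0))" using assms(1) zero unfolding vlinear_on_def by auto
  finally show ?thesis by (simp add: vsmult_def)
qed

lemma vadd_vsmult_sum_insert:
  assumes "finite S" "b \<notin> S"
  shows "(\<lambda>c. \<Sum>b'\<in>insert b S. f b' * g b' c) = vadd (vsmult (f b) (g b)) (\<lambda>c. \<Sum>b'\<in>S. f b' * g b' c)"
  using assms by (simp add: vadd_def vsmult_def)

lemma vsubspace_sum:
  assumes "vsubspace C" "finite S" "\<forall>b\<in>S. g b \<in> C"
  shows "(\<lambda>c. \<Sum>b\<in>S. f b * g b c) \<in> C"
  using assms(2,3)
proof (induction S rule: finite_induct)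
  case empty
  then show ?case using assms(1) unfolding vsubspace_def by simp
next
  case (insert b S)
  then show ?case
    using assms(1) unfolding vadd_vsmult_sum_insert[OF insert(1,2)] vsubspace_def by auto
qed

lemma vlinear_on_sum:
  assumes "vlinear_on C F" "vsubspace C" "finite S" "\<forall>b\<in>S. g b \<in> C"
  shows "F (\<lambda>c. \<Sum>b\<in>S. f b * g b c) = (\<lambda>c. \<Sum>b\<in>S. f b * F (g b) c)"
  using assms(3,4)
proof (induction S rule: finite_induct)
  case empty
  then show ?case using vlinear_on_zero[OF assms(1,2)] by simp
next
  case (insert b S)
  have rest: "(\<lambda>c. \<Sum>b\<in>S. f b * g b c) \<in> C" using vsubspace_sum[OF assms(2)] insert by auto
  have gb: "g b \<in> C" "vsmult (f b) (g b) \<in> C" using insert assms(2) unfolding vsubspace_def by auto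
  have "F (\<lambda>c. \<Sum>b\<in>insert b S. f b * g b c)
      = vadd (F (vsmult (f b) (g b))) (F (\<lambda>c. \<Sum>b\<in>S. f b * g b c))"
    unfolding vadd_vsmult_sum_insert[OF insert(1,2)] using assms(1) rest gb
    unfolding vlinear_on_def by auto
  also have "\<dots> = vadd (vsmult (f b) (F (g b))) (\<lambda>c. \<Sum>b\<in>S. f b * F (g b) c)"
    using insert gb assms(1) unfolding vlinear_on_def by auto
  also have "\<dots> = (\<lambda>c. \<Sum>b\<in>insert b S. f b * F (g b) c)"
    using insert by (simp add: vadd_def vsmult_def)
  finally show ?case .
qed

lemma vlinear_on_dadd:
  assumes "vlinear_on C F" "vlinear_on C G"
  shows "vlinear_on C (dadd F G)"
  using assms unfolding vlinear_on_def dadd_def vadd_def vsmult_def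
  by (simp add: fun_eq_iff algebra_simps)

lemma two_neq_one: "(2::'k::ring_1) \<noteq> 1"
  by (metis one_add_one add_cancel_right_right one_neq_zero)

lemma sum_sum_delta:
  assumes "finite S" "a \<in> S" "b \<in> S"
  shows "(\<Sum>p\<in>S. \<Sum>q\<in>S. if p = a \<and> q = b then f p q else 0) = (f a b :: 'k::comm_monoid_add)"
proof -
  have "(\<Sum>q\<in>S. if p = a \<and> q = b then f p q else 0) = (if p = a then f p b else 0)" for p
    using assms by (cases "p = a") (simp_all add: sum.delta')
  then show ?thesis using assms by (simp add: sum.delta')
qed

definition arrow_block :: "('a \<Rightarrow> 'v) \<Rightarrow> ('v,'a,'k::field) endo \<Rightarrow> 'a \<Rightarrow> 'a \<Rightarrow> 'k" where
  "arrow_block s D \<alpha> \<beta> = D (unit_at (arr_path s \<alpha>)) (arr_path s \<beta>)"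

definition arrow_der :: "'v set \<Rightarrow> 'a set \<Rightarrow> ('a \<Rightarrow> 'v) \<Rightarrow> ('a \<Rightarrow> 'a \<Rightarrow> 'k::field)
    \<Rightarrow> ('v,'a,'k) endo" where
  "arrow_der V E s N x = (if x \<in> rsz_carrier V E s then (\<lambda>c. if c \<in> arr_path s ` E
      then (\<Sum>\<alpha>\<in>E. x (arr_path s \<alpha>) * N \<alpha> (hd (snd c))) else 0) else (\<lambda>_. 0))"

definition inner_der :: "'v set \<Rightarrow> 'a set \<Rightarrow> ('a \<Rightarrow> 'v) \<Rightarrow> ('a \<Rightarrow> 'v) \<Rightarrow> ('v,'a,'k::field) elem
    \<Rightarrow> ('v,'a,'k) endo" where
  "inner_der V E s t a x = (if x \<in> rsz_carrier V E s then
      (\<lambda>c. rsz_mult V E s t a x c - rsz_mult V E s t x a c) else (\<lambda>_. 0))"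

definition vertex_elem :: "'v set \<Rightarrow> ('v \<Rightarrow> 'k::field) \<Rightarrow> ('v,'a,'k) elem" where
  "vertex_elem V l = (\<lambda>c. if snd c = [] \<and> fst c \<in> V then l (fst c) else 0)"

definition coboundary_matrix :: "('a \<Rightarrow> 'v) \<Rightarrow> ('a \<Rightarrow> 'v) \<Rightarrow> ('v \<Rightarrow> 'k::field) \<Rightarrow> 'a \<Rightarrow> 'a \<Rightarrow> 'k" where
  "coboundary_matrix s t l \<alpha> \<beta> = (if \<alpha> = \<beta> then l (s \<alpha>) - l (t \<alpha>) else 0)"

definition matrix_bracket :: "'a set \<Rightarrow> ('a \<Rightarrow> 'a \<Rightarrow> 'k::field) \<Rightarrow> ('a \<Rightarrow> 'a \<Rightarrow> 'k) \<Rightarrow> 'a \<Rightarrow> 'a \<Rightarrow> 'k" where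
  "matrix_bracket E N N' \<alpha> \<beta> = (\<Sum>\<gamma>\<in>E. N \<alpha> \<gamma> * N' \<gamma> \<beta> - N' \<alpha> \<gamma> * N \<gamma> \<beta>)"

lemma Inn_iff: "D \<in> Inn V E s t K \<longleftrightarrow> (\<exists>a\<in>rsz_carrier V E s. D = inner_der V E s t a)"
  unfolding Inn_def inner_der_def by (auto simp: fun_eq_iff)

lemma arrow_der_dadd:
  "arrow_der V E s (\<lambda>\<alpha> \<beta>. N \<alpha> \<beta> + N' \<alpha> \<beta>) = dadd (arrow_der V E s N) (arrow_der V E s N')"
  unfolding arrow_der_def dadd_def by (auto simp: fun_eq_iff distrib_left sum.distrib)

lemma arrow_der_dsmult: "arrow_der V E s (\<lambda>\<alpha> \<beta>. r * N \<alpha> \<beta>) = dsmult r (arrow_der V E s N)"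
  unfolding arrow_der_def dsmult_def by (auto simp: fun_eq_iff sum_distrib_left algebra_simps)

lemma arrow_der_dsub:
  "arrow_der V E s (\<lambda>\<alpha> \<beta>. N \<alpha> \<beta> - N' \<alpha> \<beta>) = dsub (arrow_der V E s N) (arrow_der V E s N')"
  unfolding arrow_der_def dsub_def by (auto simp: fun_eq_iff sum_subtractf algebra_simps)

lemma arrow_block_dadd: "arrow_block s (dadd D D') \<alpha> \<beta> = arrow_block s D \<alpha> \<beta> + arrow_block s D' \<alpha> \<beta>"
  unfolding arrow_block_def dadd_def by simp

lemma arrow_block_dsmult: "arrow_block s (dsmult r D) \<alpha> \<beta> = r * arrow_block s D \<alpha> \<beta>"
  unfolding arrow_block_def dsmult_def by simp

locale rsz_quiver =
  fixes V :: "'v set" and E :: "'a set" and s t :: "'a \<Rightarrow> 'v"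
  assumes quiver: "is_quiver V E s t"
begin

lemma finite_V: "finite V" and finite_E: "finite E"
  and source_in_V: "\<alpha> \<in> E \<Longrightarrow> s \<alpha> \<in> V" and target_in_V: "\<alpha> \<in> E \<Longrightarrow> t \<alpha> \<in> V"
  using quiver unfolding is_quiver_def by auto

lemma basis_iff: "p \<in> rsz_basis V E s \<longleftrightarrow> (snd p = [] \<and> fst p \<in> V) \<or> (\<exists>\<beta>\<in>E. p = arr_path s \<beta>)"
  unfolding rsz_basis_def arr_path_def by (cases p) auto

lemma vertex_in_basis[simp]: "(v, []) \<in> rsz_basis V E s \<longleftrightarrow> v \<in> V"
  unfolding basis_iff arr_path_def by auto

lemma arrow_in_basis[simp]: "arr_path s \<beta> \<in> rsz_basis V E s \<longleftrightarrow> \<beta> \<in> E"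
  unfolding basis_iff arr_path_def by auto

lemma arr_path_inject[simp]: "arr_path s \<alpha> = arr_path s \<beta> \<longleftrightarrow> \<alpha> = \<beta>"
  unfolding arr_path_def by auto

lemma arr_path_neq_vertex[simp]: "arr_path s \<alpha> \<noteq> (v, [])" "(v, []) \<noteq> arr_path s \<alpha>"
  unfolding arr_path_def by auto

lemma vertex_notin_arrows[simp]: "(v, []) \<notin> arr_path s ` E"
  by auto

lemma hd_arr_path[simp]: "hd (snd (arr_path s \<beta>)) = \<beta>"
  by (simp add: arr_path_def)

lemma finite_basis: "finite (rsz_basis V E s)"
  unfolding rsz_basis_def using finite_V finite_E by auto

lemma carrier_outside_basis: "x \<in> rsz_carrier V E s \<Longrightarrow> c \<notin> rsz_basis V E s \<Longrightarrow> x c = 0"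
  unfolding rsz_carrier_def by (cases c) auto

lemma unit_at_carrier[simp]: "p \<in> rsz_basis V E s \<Longrightarrow> unit_at p \<in> rsz_carrier V E s"
  unfolding rsz_carrier_def unit_at_def by auto

lemma vsubspace_carrier[simp]: "vsubspace (rsz_carrier V E s)"
  unfolding vsubspace_def rsz_carrier_def vadd_def vsmult_def by auto

lemma vertex_elem_carrier[simp]: "vertex_elem V l \<in> rsz_carrier V E s"
  unfolding vertex_elem_def rsz_carrier_def basis_iff by auto

lemma vadd_carrier[simp]:
  "x \<in> rsz_carrier V E s \<Longrightarrow> y \<in> rsz_carrier V E s \<Longrightarrow> vadd x y \<in> rsz_carrier V E s"
  and vsmult_carrier[simp]: "x \<in> rsz_carrier V E s \<Longrightarrow> vsmult a x \<in> rsz_carrier V E s"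
  using vsubspace_carrier unfolding vsubspace_def by blast+

lemma carrier_eq_basis_sum:
  "x \<in> rsz_carrier V E s \<Longrightarrow> x = (\<lambda>c. \<Sum>b\<in>rsz_basis V E s. x b * unit_at b c)"
  unfolding unit_at_def
  by (auto simp: fun_eq_iff finite_basis carrier_outside_basis sum.delta'
      if_distrib[where f="\<lambda>z. _ * z"] cong: if_cong)

lemma vlinear_on_eqI:
  assumes "vlinear_on (rsz_carrier V E s) F" "vlinear_on (rsz_carrier V E s) G"
    and "\<And>b. b \<in> rsz_basis V E s \<Longrightarrow> F (unit_at b) = G (unit_at b)"
    and "x \<in> rsz_carrier V E s"
  shows "F x = G x"
proof -
  note expand = carrier_eq_basis_sum[OF assms(4)]
  have "F x = (\<lambda>c. \<Sum>b\<in>rsz_basis V E s. x b * F (unit_at b) c)"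
    by (subst expand) (simp add: vlinear_on_sum[OF assms(1) vsubspace_carrier finite_basis])
  also have "\<dots> = (\<lambda>c. \<Sum>b\<in>rsz_basis V E s. x b * G (unit_at b) c)" using assms(3) by simp
  also have "\<dots> = G x"
    by (subst (2) expand) (simp add: vlinear_on_sum[OF assms(2) vsubspace_carrier finite_basis])
  finally show ?thesis .
qed

lemma rsz_mult_vertex:
  assumes "v \<in> V"
  shows "rsz_mult V E s t x y (v, []) = x (v, []) * y (v, [])"
proof -
  have "rsz_mult V E s t x y (v, []) = (\<Sum>p\<in>rsz_basis V E s. \<Sum>q\<in>rsz_basis V E s.
      if p = (v, []) \<and> q = (v, []) then x p * y q else 0)"
    unfolding rsz_mult_def by (intro sum.cong refl) (auto simp: path_tgt_def)
  also have "\<dots> = x (v, []) * y (v, [])"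
    using assms by (simp add: finite_basis sum_sum_delta)
  finally show ?thesis .
qed

lemma rsz_mult_arrow:
  assumes "\<beta> \<in> E"
  shows "rsz_mult V E s t x y (arr_path s \<beta>) =
     x (s \<beta>, []) * y (arr_path s \<beta>) + x (arr_path s \<beta>) * y (t \<beta>, [])"
proof -
  have "rsz_mult V E s t x y (arr_path s \<beta>) = (\<Sum>p\<in>rsz_basis V E s. \<Sum>q\<in>rsz_basis V E s.
      (if p = (s \<beta>, []) \<and> q = arr_path s \<beta> then x p * y q else 0)
    + (if p = arr_path s \<beta> \<and> q = (t \<beta>, []) then x p * y q else 0))"
    unfolding rsz_mult_def
    by (intro sum.cong refl, simp only: basis_iff) (auto simp: path_tgt_def arr_path_def)
  also have "\<dots> = x (s \<beta>, []) * y (arr_path s \<beta>) + x (arr_path s \<beta>) * y (t \<beta>, [])"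
    using assms source_in_V target_in_V by (simp add: sum.distrib finite_basis sum_sum_delta)
  finally show ?thesis .
qed

lemma rsz_mult_outside_basis:
  assumes "c \<notin> rsz_basis V E s"
  shows "rsz_mult V E s t x y c = 0"
  unfolding rsz_mult_def
proof (intro sum.neutral ballI if_not_P notI)
  fix p q assume "p \<in> rsz_basis V E s" "q \<in> rsz_basis V E s"
    and "path_tgt t p = fst q \<and> length (snd p @ snd q) \<le> 1 \<and> (fst p, snd p @ snd q) = c"
  then have "c \<in> rsz_basis V E s" unfolding basis_iff by (auto simp: arr_path_def path_tgt_def)
  then show False using assms by simp
qed

lemma rsz_mult_carrier[simp]: "rsz_mult V E s t x y \<in> rsz_carrier V E s"
  unfolding rsz_carrier_def using rsz_mult_outside_basis by auto

lemma rsz_mult_eval: "rsz_mult V E s t x y c = (if c \<in> rsz_basis V E s then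
    (if snd c = [] then x c * y c else x (fst c, []) * y c + x c * y (t (hd (snd c)), [])) else 0)"
proof (cases "c \<in> rsz_basis V E s")
  case True
  then show ?thesis unfolding basis_iff
    using rsz_mult_vertex rsz_mult_arrow by (cases c) (auto simp: arr_path_def)
next
  case False
  then show ?thesis using rsz_mult_outside_basis by simp
qed

lemma unit_source_times_unit_arrow:
  "\<alpha> \<in> E \<Longrightarrow> rsz_mult V E s t (unit_at (s \<alpha>, [])) (unit_at (arr_path s \<alpha>)) = unit_at (arr_path s \<alpha>)"
  and unit_arrow_times_unit_target:
  "\<alpha> \<in> E \<Longrightarrow> rsz_mult V E s t (unit_at (arr_path s \<alpha>)) (unit_at (t \<alpha>, [])) = unit_at (arr_path s \<alpha>)"
  and unit_arrow_times_unit_arrow: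
  "\<alpha> \<in> E \<Longrightarrow> rsz_mult V E s t (unit_at (arr_path s \<alpha>)) (unit_at (arr_path s \<alpha>)) = (\<lambda>_. 0)"
  and unit_vertex_idem:
  "w \<in> V \<Longrightarrow> rsz_mult V E s t (unit_at (w, [])) (unit_at (w, [])) = unit_at (w, [])"
  and unit_vertices_orthogonal:
  "v \<noteq> w \<Longrightarrow> rsz_mult V E s t (unit_at (v, [])) (unit_at (w, [])) = (\<lambda>_. 0)"
  unfolding rsz_mult_eval unit_at_def fun_eq_iff
  by (auto simp: basis_iff arr_path_def source_in_V target_in_V)

lemma Der_vlinear_on: "D \<in> Der V E s t K \<Longrightarrow> vlinear_on (rsz_carrier V E s) D"
  unfolding Der_def vlinear_on_def by auto

lemma Der_carrier: "D \<in> Der V E s t K \<Longrightarrow> x \<in> rsz_carrier V E s \<Longrightarrow> D x \<in> rsz_carrier V E s"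
  unfolding Der_def by auto

lemma Der_outside_carrier: "D \<in> Der V E s t K \<Longrightarrow> x \<notin> rsz_carrier V E s \<Longrightarrow> D x = (\<lambda>_. 0)"
  unfolding Der_def by auto

lemma Der_zero: "D \<in> Der V E s t K \<Longrightarrow> D (\<lambda>_. 0) = (\<lambda>_. 0)"
  using vlinear_on_zero Der_vlinear_on vsubspace_carrier by blast

lemma Der_coeff_outside_basis:
  "D \<in> Der V E s t K \<Longrightarrow> x \<in> rsz_carrier V E s \<Longrightarrow> c \<notin> rsz_basis V E s \<Longrightarrow> D x c = 0"
  using Der_carrier carrier_outside_basis by blast

lemma Der_Leibniz:
  "D \<in> Der V E s t K \<Longrightarrow> x \<in> rsz_carrier V E s \<Longrightarrow> y \<in> rsz_carrier V E s \<Longrightarrow>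
   D (rsz_mult V E s t x y) c = rsz_mult V E s t (D x) y c + rsz_mult V E s t x (D y) c"
  unfolding Der_def by (simp add: vadd_def)

lemma Der_unit_arrow_Leibniz:
  assumes D: "D \<in> Der V E s t K" and \<alpha>: "\<alpha> \<in> E"
  shows "D (unit_at (arr_path s \<alpha>)) c =
           rsz_mult V E s t (D (unit_at (s \<alpha>, []))) (unit_at (arr_path s \<alpha>)) c
         + rsz_mult V E s t (unit_at (s \<alpha>, [])) (D (unit_at (arr_path s \<alpha>))) c"
    and "D (unit_at (arr_path s \<alpha>)) c =
           rsz_mult V E s t (D (unit_at (arr_path s \<alpha>))) (unit_at (t \<alpha>, [])) c
         + rsz_mult V E s t (unit_at (arr_path s \<alpha>)) (D (unit_at (t \<alpha>, []))) c"
    and "rsz_mult V E s t (D (unit_at (arr_path s \<alpha>))) (unit_at (arr_path s \<alpha>)) c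
         + rsz_mult V E s t (unit_at (arr_path s \<alpha>)) (D (unit_at (arr_path s \<alpha>))) c = 0"
  using Der_Leibniz[OF D, of "unit_at (s \<alpha>, [])" "unit_at (arr_path s \<alpha>)" c]
    Der_Leibniz[OF D, of "unit_at (arr_path s \<alpha>)" "unit_at (t \<alpha>, [])" c]
    Der_Leibniz[OF D, of "unit_at (arr_path s \<alpha>)" "unit_at (arr_path s \<alpha>)" c]
  by (simp_all add: \<alpha> source_in_V target_in_V unit_source_times_unit_arrow
      unit_arrow_times_unit_target unit_arrow_times_unit_arrow Der_zero[OF D])

text \<open>Characteristic 0 enters here: for a loop \<alpha> at v the Leibniz rule only gives
  2 D(\<alpha>)(v) = 0.\<close>
lemma Der_unit_arrow_vertex_coeff:
  fixes D :: "('v,'a,'k::field_char_0) endo"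
  assumes D: "D \<in> Der V E s t K" and \<alpha>: "\<alpha> \<in> E"
  shows "D (unit_at (arr_path s \<alpha>)) (v, []) = 0"
proof (cases "v \<in> V")
  case False
  then show ?thesis using Der_coeff_outside_basis[OF D] \<alpha> by simp
next
  case v: True
  note Leibniz = Der_unit_arrow_Leibniz[OF D \<alpha>, of "(v, [])"]
  have "v \<noteq> s \<alpha> \<Longrightarrow> D (unit_at (arr_path s \<alpha>)) (v, []) = 0"
    using Leibniz(1) v by (simp add: rsz_mult_vertex unit_at_def)
  moreover have "v \<noteq> t \<alpha> \<Longrightarrow> D (unit_at (arr_path s \<alpha>)) (v, []) = 0"
    using Leibniz(2) v by (simp add: rsz_mult_vertex unit_at_def)
  moreover have "D (unit_at (arr_path s \<alpha>)) (s \<alpha>, []) + D (unit_at (arr_path s \<alpha>)) (t \<alpha>, []) = 0"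
    using Der_unit_arrow_Leibniz(3)[OF D \<alpha>, of "arr_path s \<alpha>"] \<alpha>
    by (simp add: rsz_mult_arrow unit_at_def)
  ultimately show ?thesis by (cases "v = s \<alpha> \<and> v = t \<alpha>") auto
qed

lemma arrow_block_nonzero_imp_parallel:
  assumes D: "D \<in> Der V E s t K" and \<alpha>: "\<alpha> \<in> E" and \<beta>: "\<beta> \<in> E"
    and nz: "arrow_block s D \<alpha> \<beta> \<noteq> 0"
  shows "s \<alpha> = s \<beta> \<and> t \<alpha> = t \<beta>"
proof (cases "\<alpha> = \<beta>")
  case False
  note Leibniz = Der_unit_arrow_Leibniz[OF D \<alpha>, of "arr_path s \<beta>"]
  have "D (unit_at (arr_path s \<alpha>)) (arr_path s \<beta>) \<noteq> 0" using nz by (simp add: arrow_block_def)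
  then show ?thesis
    using Leibniz(1,2) \<beta> False by (auto simp: rsz_mult_arrow unit_at_def split: if_splits)
qed simp

lemma sum_unit_arrows:
  "(\<lambda>c. \<Sum>\<gamma>\<in>E. N \<gamma> * unit_at (arr_path s \<gamma>) c)
     = (\<lambda>c. if c \<in> arr_path s ` E then N (hd (snd c)) else (0::'k::field))"
proof
  fix c
  show "(\<Sum>\<gamma>\<in>E. N \<gamma> * unit_at (arr_path s \<gamma>) c) = (if c \<in> arr_path s ` E then N (hd (snd c)) else 0)"
  proof (cases "c \<in> arr_path s ` E")
    case True
    then obtain \<beta> where \<beta>: "\<beta> \<in> E" "c = arr_path s \<beta>" by auto
    have "(\<Sum>\<gamma>\<in>E. N \<gamma> * unit_at (arr_path s \<gamma>) c) = (\<Sum>\<gamma>\<in>E. if \<gamma> = \<beta> then N \<gamma> else 0)"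
      by (intro sum.cong refl) (auto simp: unit_at_def \<beta>)
    then show ?thesis using \<beta> finite_E by simp
  next
    case False
    then show ?thesis by (auto simp: unit_at_def intro!: sum.neutral)
  qed
qed

lemma Der_unit_arrow:
  fixes D :: "('v,'a,'k::field_char_0) endo"
  assumes D: "D \<in> Der V E s t K" and \<alpha>: "\<alpha> \<in> E"
  shows "D (unit_at (arr_path s \<alpha>)) = (\<lambda>c. \<Sum>\<gamma>\<in>E. arrow_block s D \<alpha> \<gamma> * unit_at (arr_path s \<gamma>) c)"
  unfolding sum_unit_arrows
proof
  fix c
  show "D (unit_at (arr_path s \<alpha>)) c = (if c \<in> arr_path s ` E then arrow_block s D \<alpha> (hd (snd c)) else 0)"
  proof (cases "c \<in> arr_path s ` E")
    case True
    then show ?thesis by (auto simp: arrow_block_def)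
  next
    case False
    show ?thesis
    proof (cases "c \<in> rsz_basis V E s")
      case True
      then obtain v where "c = (v, [])" using False unfolding basis_iff by (cases c) auto
      then show ?thesis using Der_unit_arrow_vertex_coeff[OF D \<alpha>] by simp
    next
      case nb: False
      then show ?thesis using Der_coeff_outside_basis[OF D _ nb] \<alpha> False by simp
    qed
  qed
qed

lemma arrow_der_eval:
  "x \<in> rsz_carrier V E s \<Longrightarrow> arrow_der V E s N x c =
     (if c \<in> arr_path s ` E then (\<Sum>\<alpha>\<in>E. x (arr_path s \<alpha>) * N \<alpha> (hd (snd c))) else 0)"
  unfolding arrow_der_def by simp

lemma arrow_der_outside_carrier: "x \<notin> rsz_carrier V E s \<Longrightarrow> arrow_der V E s N x = (\<lambda>_. 0)"
  unfolding arrow_der_def by simp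

lemma arrow_der_carrier[simp]: "arrow_der V E s N x \<in> rsz_carrier V E s"
  unfolding arrow_der_def rsz_carrier_def by auto

lemma arrow_der_vlinear_on:
  fixes N :: "'a \<Rightarrow> 'a \<Rightarrow> 'k::field"
  shows "vlinear_on (rsz_carrier V E s) (arrow_der V E s N)"
  unfolding vlinear_on_def
proof (intro conjI ballI allI)
  fix x y :: "('v,'a,'k) elem" assume x: "x \<in> rsz_carrier V E s" and y: "y \<in> rsz_carrier V E s"
  then have "vadd x y \<in> rsz_carrier V E s" by simp
  then show "arrow_der V E s N (vadd x y) = vadd (arrow_der V E s N x) (arrow_der V E s N y)"
    using x y by (auto simp: fun_eq_iff arrow_der_eval vadd_def distrib_right sum.distrib)
next
  fix a :: 'k and x :: "('v,'a,'k) elem" assume x: "x \<in> rsz_carrier V E s"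
  then have "vsmult a x \<in> rsz_carrier V E s" by simp
  then show "arrow_der V E s N (vsmult a x) = vsmult a (arrow_der V E s N x)"
    using x by (auto simp: fun_eq_iff arrow_der_eval vsmult_def sum_distrib_left mult.assoc)
qed

lemma arrow_der_unit_arrow:
  "\<alpha> \<in> E \<Longrightarrow> arrow_der V E s N (unit_at (arr_path s \<alpha>)) =
     (\<lambda>c. if c \<in> arr_path s ` E then N \<alpha> (hd (snd c)) else (0::'k::field))"
proof (rule ext)
  fix c :: "('v,'a) path"
  assume \<alpha>: "\<alpha> \<in> E"
  have "(\<Sum>\<gamma>\<in>E. unit_at (arr_path s \<alpha>) (arr_path s \<gamma>) * N \<gamma> (hd (snd c)))
      = (\<Sum>\<gamma>\<in>E. if \<gamma> = \<alpha> then N \<gamma> (hd (snd c)) else (0::'k))"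
    by (intro sum.cong refl) (auto simp: unit_at_def)
  then show "arrow_der V E s N (unit_at (arr_path s \<alpha>)) c
      = (if c \<in> arr_path s ` E then N \<alpha> (hd (snd c)) else 0)"
    using \<alpha> finite_E by (simp add: arrow_der_eval)
qed

lemma arrow_der_unit_vertex: "arrow_der V E s N (unit_at (w, [])) = (\<lambda>_. (0::'k::field))"
  by (auto simp: fun_eq_iff arrow_der_def unit_at_def)

lemma arrow_block_arrow_der:
  "\<alpha> \<in> E \<Longrightarrow> \<beta> \<in> E \<Longrightarrow> arrow_block s (arrow_der V E s N) \<alpha> \<beta> = N \<alpha> \<beta>"
  by (simp add: arrow_block_def arrow_der_unit_arrow)

lemma arrow_der_cong:
  "(\<And>\<alpha> \<beta>. \<alpha> \<in> E \<Longrightarrow> \<beta> \<in> E \<Longrightarrow> N \<alpha> \<beta> = N' \<alpha> \<beta>) \<Longrightarrow> arrow_der V E s N = arrow_der V E s N'"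
  unfolding arrow_der_def by (auto simp: fun_eq_iff arr_path_def intro!: sum.cong)

text \<open>Both sides of the Leibniz rule at an arrow \<beta> reduce to sums over the arrows \<alpha> with
  N \<alpha> \<beta> \<noteq> 0, which are parallel to \<beta>; at vertices both sides vanish.\<close>
lemma arrow_der_Der:
  assumes parallel: "\<And>\<alpha> \<beta>. \<alpha> \<in> E \<Longrightarrow> \<beta> \<in> E \<Longrightarrow> N \<alpha> \<beta> \<noteq> 0 \<Longrightarrow> s \<alpha> = s \<beta> \<and> t \<alpha> = t \<beta>"
  shows "arrow_der V E s N \<in> Der V E s t K"
proof -
  have "arrow_der V E s N (rsz_mult V E s t x y) c
      = rsz_mult V E s t (arrow_der V E s N x) y c + rsz_mult V E s t x (arrow_der V E s N y) c"
    if x: "x \<in> rsz_carrier V E s" and y: "y \<in> rsz_carrier V E s" for x y c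
  proof (cases "c \<in> arr_path s ` E")
    case True
    then obtain \<beta> where \<beta>: "\<beta> \<in> E" "c = arr_path s \<beta>" by auto
    have "arrow_der V E s N (rsz_mult V E s t x y) c
        = (\<Sum>\<alpha>\<in>E. (x (s \<alpha>, []) * y (arr_path s \<alpha>) + x (arr_path s \<alpha>) * y (t \<alpha>, [])) * N \<alpha> \<beta>)"
      using \<beta> by (simp add: arrow_der_eval rsz_mult_arrow)
    also have "\<dots> = (\<Sum>\<alpha>\<in>E. x (arr_path s \<alpha>) * N \<alpha> \<beta> * y (t \<beta>, [])
                         + x (s \<beta>, []) * (y (arr_path s \<alpha>) * N \<alpha> \<beta>))"
      using parallel[OF _ \<beta>(1)] by (intro sum.cong refl) (force simp: algebra_simps)
    also have "\<dots> = (\<Sum>\<alpha>\<in>E. x (arr_path s \<alpha>) * N \<alpha> \<beta>) * y (t \<beta>, [])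
                  + x (s \<beta>, []) * (\<Sum>\<alpha>\<in>E. y (arr_path s \<alpha>) * N \<alpha> \<beta>)"
      by (simp add: sum.distrib sum_distrib_left sum_distrib_right)
    also have "\<dots> = rsz_mult V E s t (arrow_der V E s N x) y c
                    + rsz_mult V E s t x (arrow_der V E s N y) c"
      using \<beta> x y by (simp add: rsz_mult_arrow arrow_der_eval)
    finally show ?thesis .
  next
    case False
    then show ?thesis
      using x y by (cases c) (auto simp: rsz_mult_eval arrow_der_eval basis_iff)
  qed
  then show ?thesis
    using arrow_der_vlinear_on[of N]
    unfolding Der_def vlinear_on_def by (auto simp: arrow_der_outside_carrier vadd_def fun_eq_iff)
qed

lemma vertex_elem_arrow[simp]: "vertex_elem V l (arr_path s \<beta>) = 0"
  unfolding vertex_elem_def arr_path_def by simp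

lemma vertex_elem_vertex[simp]: "vertex_elem V l (v, []) = (if v \<in> V then l v else 0)"
  unfolding vertex_elem_def by simp

lemma inner_der_eval:
  "x \<in> rsz_carrier V E s \<Longrightarrow> inner_der V E s t a x c = rsz_mult V E s t a x c - rsz_mult V E s t x a c"
  unfolding inner_der_def by simp

lemma inner_der_outside_carrier: "x \<notin> rsz_carrier V E s \<Longrightarrow> inner_der V E s t a x = (\<lambda>_. 0)"
  unfolding inner_der_def by simp

lemma inner_der_carrier[simp]: "inner_der V E s t a x \<in> rsz_carrier V E s"
  unfolding inner_der_def rsz_carrier_def by (auto simp: rsz_mult_outside_basis)

lemma inner_der_Inn: "a \<in> rsz_carrier V E s \<Longrightarrow> inner_der V E s t a \<in> Inn V E s t K"
  unfolding Inn_iff by blast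

lemma inner_der_vlinear_on:
  fixes a :: "('v,'a) path \<Rightarrow> 'k::field"
  shows "vlinear_on (rsz_carrier V E s) (inner_der V E s t a)"
  unfolding vlinear_on_def
proof (intro conjI ballI allI)
  fix x y :: "('v,'a,'k) elem" assume x: "x \<in> rsz_carrier V E s" and y: "y \<in> rsz_carrier V E s"
  then have "vadd x y \<in> rsz_carrier V E s" by simp
  then show "inner_der V E s t a (vadd x y) = vadd (inner_der V E s t a x) (inner_der V E s t a y)"
    using x y by (auto simp: fun_eq_iff inner_der_eval vadd_def rsz_mult_eval algebra_simps)
next
  fix r :: 'k and x :: "('v,'a,'k) elem" assume x: "x \<in> rsz_carrier V E s"
  then have "vsmult r x \<in> rsz_carrier V E s" by simp
  then show "inner_der V E s t a (vsmult r x) = vsmult r (inner_der V E s t a x)"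
    using x by (auto simp: fun_eq_iff inner_der_eval vsmult_def rsz_mult_eval algebra_simps)
qed

lemma inner_der_vadd: "inner_der V E s t (vadd a b) = dadd (inner_der V E s t a) (inner_der V E s t b)"
  by (auto simp: fun_eq_iff dadd_def inner_der_def vadd_def rsz_mult_eval algebra_simps)

lemma inner_der_vsmult: "inner_der V E s t (vsmult r a) = dsmult r (inner_der V E s t a)"
  by (auto simp: fun_eq_iff dsmult_def inner_der_def vsmult_def rsz_mult_eval algebra_simps)

lemma arrow_block_inner_der:
  assumes "\<alpha> \<in> E" "\<beta> \<in> E"
  shows "arrow_block s (inner_der V E s t a) \<alpha> \<beta> = coboundary_matrix s t (\<lambda>v. a (v, [])) \<alpha> \<beta>"
proof -
  have "unit_at (arr_path s \<alpha>) \<in> rsz_carrier V E s" using assms by simp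
  then show ?thesis unfolding arrow_block_def inner_der_eval[OF \<open>_ \<in> rsz_carrier V E s\<close>]
    using assms by (simp add: coboundary_matrix_def rsz_mult_arrow unit_at_def)
qed

lemma arrow_der_coboundary:
  fixes l :: "'v \<Rightarrow> 'k::field"
  shows "arrow_der V E s (coboundary_matrix s t l) = inner_der V E s t (vertex_elem V l)"
proof (intro ext)
  fix x :: "('v,'a) path \<Rightarrow> 'k" and c
  show "arrow_der V E s (coboundary_matrix s t l) x c = inner_der V E s t (vertex_elem V l) x c"
  proof (cases "x \<in> rsz_carrier V E s")
    case x: True
    show ?thesis
    proof (cases "c \<in> arr_path s ` E")
      case True
      then obtain \<beta> where \<beta>: "\<beta> \<in> E" "c = arr_path s \<beta>" by auto
      have "arrow_der V E s (coboundary_matrix s t l) x c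
          = (\<Sum>\<alpha>\<in>E. if \<alpha> = \<beta> then x (arr_path s \<alpha>) * (l (s \<alpha>) - l (t \<alpha>)) else 0)"
        using \<beta> x by (auto simp: arrow_der_eval coboundary_matrix_def intro!: sum.cong)
      also have "\<dots> = inner_der V E s t (vertex_elem V l) x c"
        using \<beta> x finite_E source_in_V target_in_V
        by (simp add: inner_der_eval rsz_mult_arrow algebra_simps)
      finally show ?thesis .
    next
      case False
      then show ?thesis
        using x by (cases c) (auto simp: arrow_der_eval inner_der_eval rsz_mult_eval basis_iff)
    qed
  qed (simp add: arrow_der_outside_carrier inner_der_outside_carrier)
qed

lemma Der_unit_vertex_vertex_coeff:
  assumes D: "D \<in> Der V E s t K" and w: "w \<in> V"
  shows "D (unit_at (w, [])) (v, []) = 0"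
proof (cases "v \<in> V")
  case False
  then show ?thesis using Der_coeff_outside_basis[OF D] w by simp
next
  case v: True
  have unit_w: "unit_at (w, []) \<in> rsz_carrier V E s" using w by simp
  show ?thesis
    using Der_Leibniz[OF D unit_w unit_w, of "(v, [])"]
    unfolding unit_vertex_idem[OF w] rsz_mult_vertex[OF v]
    by (cases "v = w") (simp_all add: unit_at_def two_neq_one)
qed

lemma Der_unit_vertex_arrow_coeff:
  assumes D: "D \<in> Der V E s t K" and w: "w \<in> V" and \<gamma>: "\<gamma> \<in> E"
    and not_end: "\<not> (s \<gamma> \<noteq> t \<gamma> \<and> (w = s \<gamma> \<or> w = t \<gamma>))"
  shows "D (unit_at (w, [])) (arr_path s \<gamma>) = 0"
proof -
  have unit_w: "unit_at (w, []) \<in> rsz_carrier V E s" using w by simp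
  have "D (unit_at (w, [])) (arr_path s \<gamma>)
      = D (unit_at (w, [])) (arr_path s \<gamma>) * unit_at (w, []) (t \<gamma>, [])
      + unit_at (w, []) (s \<gamma>, []) * D (unit_at (w, [])) (arr_path s \<gamma>)"
    using Der_Leibniz[OF D unit_w unit_w, of "arr_path s \<gamma>"]
    unfolding unit_vertex_idem[OF w] rsz_mult_arrow[OF \<gamma>] by (simp add: unit_at_def)
  then show ?thesis using not_end by (cases "w = s \<gamma>") (auto simp: unit_at_def two_neq_one)
qed

lemma Der_unit_source_target:
  assumes D: "D \<in> Der V E s t K" and \<gamma>: "\<gamma> \<in> E" and not_loop: "s \<gamma> \<noteq> t \<gamma>"
  shows "D (unit_at (s \<gamma>, [])) (arr_path s \<gamma>) + D (unit_at (t \<gamma>, [])) (arr_path s \<gamma>) = 0"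
proof -
  have units: "unit_at (s \<gamma>, []) \<in> rsz_carrier V E s" "unit_at (t \<gamma>, []) \<in> rsz_carrier V E s"
    using \<gamma> source_in_V target_in_V by auto
  show ?thesis
    using Der_Leibniz[OF D units, of "arr_path s \<gamma>"]
    unfolding unit_vertices_orthogonal[OF not_loop] Der_zero[OF D] rsz_mult_arrow[OF \<gamma>]
    by (simp add: unit_at_def)
qed

definition inner_part :: "('v,'a,'k::field) endo \<Rightarrow> ('v,'a,'k) elem" where
  "inner_part D = (\<lambda>c. if c \<in> arr_path s ` E \<and> s (hd (snd c)) \<noteq> t (hd (snd c))
      then D (unit_at (t (hd (snd c)), [])) c else 0)"

lemma inner_part_carrier: "inner_part D \<in> rsz_carrier V E s"
  unfolding inner_part_def rsz_carrier_def by auto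

lemma inner_part_vertex[simp]: "inner_part D (v, []) = 0"
  unfolding inner_part_def by simp

lemma inner_part_arrow:
  "\<gamma> \<in> E \<Longrightarrow> inner_part D (arr_path s \<gamma>) = (if s \<gamma> \<noteq> t \<gamma> then D (unit_at (t \<gamma>, [])) (arr_path s \<gamma>) else 0)"
  unfolding inner_part_def by auto

lemma Der_unit_vertex:
  assumes D: "D \<in> Der V E s t K" and w: "w \<in> V"
  shows "D (unit_at (w, [])) = inner_der V E s t (inner_part D) (unit_at (w, []))"
proof
  fix c
  have unit_w: "unit_at (w, []) \<in> rsz_carrier V E s" using w by simp
  consider (outside) "c \<notin> rsz_basis V E s" | (vertex) v where "v \<in> V" "c = (v, [])"
    | (arrow) \<gamma> where "\<gamma> \<in> E" "c = arr_path s \<gamma>"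
    unfolding basis_iff by (cases c) auto
  then show "D (unit_at (w, [])) c = inner_der V E s t (inner_part D) (unit_at (w, [])) c"
  proof cases
    case outside
    then show ?thesis
      using Der_coeff_outside_basis[OF D unit_w] carrier_outside_basis[OF inner_der_carrier] by simp
  next
    case vertex
    then show ?thesis
      using Der_unit_vertex_vertex_coeff[OF D w] by (simp add: inner_der_eval[OF unit_w] rsz_mult_vertex)
  next
    case arrow
    have "inner_der V E s t (inner_part D) (unit_at (w, [])) c
        = inner_part D (arr_path s \<gamma>) * (unit_at (w, []) (t \<gamma>, []) - unit_at (w, []) (s \<gamma>, []))"
      unfolding arrow(2) inner_der_eval[OF unit_w] rsz_mult_arrow[OF arrow(1)]
      by (simp add: unit_at_def algebra_simps)
    moreover have "D (unit_at (s \<gamma>, [])) (arr_path s \<gamma>) = - D (unit_at (t \<gamma>, [])) (arr_path s \<gamma>)"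
      if "s \<gamma> \<noteq> t \<gamma>"
      using Der_unit_source_target[OF D arrow(1) that] by (simp add: eq_neg_iff_add_eq_0)
    ultimately show ?thesis
      using arrow Der_unit_vertex_arrow_coeff[OF D w arrow(1)]
      by (auto simp: inner_part_arrow unit_at_def)
  qed
qed

theorem Der_decomposition:
  fixes D :: "('v,'a,'k::field_char_0) endo"
  assumes D: "D \<in> Der V E s t K"
  shows "D = dadd (arrow_der V E s (arrow_block s D)) (inner_der V E s t (inner_part D))"
    (is "D = ?G")
proof
  fix x
  show "D x = ?G x"
  proof (cases "x \<in> rsz_carrier V E s")
    case x: True
    have "vlinear_on (rsz_carrier V E s) ?G"
      by (intro vlinear_on_dadd arrow_der_vlinear_on inner_der_vlinear_on)
    moreover have "D (unit_at b) = ?G (unit_at b)" if b: "b \<in> rsz_basis V E s" for b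
    proof -
      consider (vertex) v where "v \<in> V" "b = (v, [])" | (arrow) \<alpha> where "\<alpha> \<in> E" "b = arr_path s \<alpha>"
        using b unfolding basis_iff by (cases b) auto
      then show ?thesis
      proof cases
        case vertex
        then show ?thesis
          using Der_unit_vertex[OF D] by (simp add: dadd_def arrow_der_unit_vertex)
      next
        case arrow
        have unit_\<alpha>: "unit_at (arr_path s \<alpha>) \<in> rsz_carrier V E s" using arrow by simp
        have "inner_der V E s t (inner_part D) (unit_at (arr_path s \<alpha>)) = (\<lambda>_. 0)"
          unfolding inner_der_eval[OF unit_\<alpha>] rsz_mult_eval by (auto simp: fun_eq_iff unit_at_def)
        then show ?thesis
          using arrow Der_unit_arrow[OF D arrow(1)]
          by (simp add: dadd_def arrow_der_unit_arrow sum_unit_arrows)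
      qed
    qed
    ultimately show ?thesis using vlinear_on_eqI[OF Der_vlinear_on[OF D]] x by blast
  next
    case False
    then show ?thesis
      by (simp add: Der_outside_carrier[OF D] arrow_der_outside_carrier inner_der_outside_carrier
          dadd_def)
  qed
qed

lemma arrow_block_dbracket:
  fixes D D' :: "('v,'a,'k::field_char_0) endo"
  assumes D: "D \<in> Der V E s t K" and D': "D' \<in> Der V E s t K" and \<alpha>: "\<alpha> \<in> E"
  shows "arrow_block s (dbracket D D') \<alpha> \<beta> = matrix_bracket E (arrow_block s D') (arrow_block s D) \<alpha> \<beta>"
proof -
  have units: "\<forall>\<gamma>\<in>E. unit_at (arr_path s \<gamma>) \<in> rsz_carrier V E s" by simp
  have "D (D' (unit_at (arr_path s \<alpha>)))
      = (\<lambda>c. \<Sum>\<gamma>\<in>E. arrow_block s D' \<alpha> \<gamma> * D (unit_at (arr_path s \<gamma>)) c)"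
    unfolding Der_unit_arrow[OF D' \<alpha>]
    by (rule vlinear_on_sum[OF Der_vlinear_on[OF D] vsubspace_carrier finite_E units])
  moreover have "D' (D (unit_at (arr_path s \<alpha>)))
      = (\<lambda>c. \<Sum>\<gamma>\<in>E. arrow_block s D \<alpha> \<gamma> * D' (unit_at (arr_path s \<gamma>)) c)"
    unfolding Der_unit_arrow[OF D \<alpha>]
    by (rule vlinear_on_sum[OF Der_vlinear_on[OF D'] vsubspace_carrier finite_E units])
  ultimately show ?thesis
    unfolding arrow_block_def dbracket_def matrix_bracket_def by (simp add: sum_subtractf)
qed

lemma dbracket_arrow_der:
  fixes N N' :: "'a \<Rightarrow> 'a \<Rightarrow> 'k::field"
  shows "dbracket (arrow_der V E s N) (arrow_der V E s N') = arrow_der V E s (matrix_bracket E N' N)"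
proof (intro ext)
  fix x :: "('v,'a) path \<Rightarrow> 'k" and c :: "('v,'a) path"
  show "dbracket (arrow_der V E s N) (arrow_der V E s N') x c
      = arrow_der V E s (matrix_bracket E N' N) x c"
  proof (cases "x \<in> rsz_carrier V E s \<and> c \<in> arr_path s ` E")
    case True
    then obtain \<beta> where x: "x \<in> rsz_carrier V E s" and \<beta>: "\<beta> \<in> E" "c = arr_path s \<beta>" by auto
    have "dbracket (arrow_der V E s N) (arrow_der V E s N') x c
        = (\<Sum>\<alpha>\<in>E. (\<Sum>\<gamma>\<in>E. x (arr_path s \<gamma>) * N' \<gamma> \<alpha>) * N \<alpha> \<beta>)
        - (\<Sum>\<alpha>\<in>E. (\<Sum>\<gamma>\<in>E. x (arr_path s \<gamma>) * N \<gamma> \<alpha>) * N' \<alpha> \<beta>)"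
      using x \<beta> by (simp add: dbracket_def arrow_der_eval)
    also have "\<dots> = (\<Sum>\<alpha>\<in>E. \<Sum>\<gamma>\<in>E. x (arr_path s \<gamma>) * (N' \<gamma> \<alpha> * N \<alpha> \<beta> - N \<gamma> \<alpha> * N' \<alpha> \<beta>))"
      unfolding sum_subtractf[symmetric] sum_distrib_right
      by (intro sum.cong refl) (simp add: algebra_simps)
    also have "\<dots> = (\<Sum>\<gamma>\<in>E. x (arr_path s \<gamma>) * matrix_bracket E N' N \<gamma> \<beta>)"
      by (subst sum.swap) (simp add: matrix_bracket_def sum_distrib_left)
    also have "\<dots> = arrow_der V E s (matrix_bracket E N' N) x c"
      using x \<beta> by (simp add: arrow_der_eval)
    finally show ?thesis .
  next
    case False
    have "arrow_der V E s M (\<lambda>_. 0) = (\<lambda>_. 0)" for M :: "'a \<Rightarrow> 'a \<Rightarrow> 'k"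
      unfolding arrow_der_def rsz_carrier_def by auto
    with False show ?thesis
      by (auto simp: dbracket_def arrow_der_def)
  qed
qed

lemma zero_der_Inn: "(\<lambda>x c. 0 :: 'k::field) \<in> Inn V E s t K"
proof -
  have "(\<lambda>_. 0 :: 'k) \<in> rsz_carrier V E s" by (simp add: rsz_carrier_def)
  moreover have "inner_der V E s t (\<lambda>_. 0 :: 'k) = (\<lambda>x c. 0)"
    by (auto simp: fun_eq_iff inner_der_def rsz_mult_eval)
  ultimately show ?thesis unfolding Inn_iff by metis
qed

end

lemma weighted_trace_matrix_bracket:
  fixes N N' :: "'a \<Rightarrow> 'a \<Rightarrow> 'k::field"
  assumes "\<And>\<alpha> \<beta>. \<alpha> \<in> E \<Longrightarrow> \<beta> \<in> E \<Longrightarrow> N \<alpha> \<beta> \<noteq> 0 \<Longrightarrow> w \<alpha> = w \<beta>"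
  shows "(\<Sum>\<alpha>\<in>E. w \<alpha> * matrix_bracket E N N' \<alpha> \<alpha>) = 0"
proof -
  have "(\<Sum>\<alpha>\<in>E. \<Sum>\<gamma>\<in>E. w \<alpha> * (N \<alpha> \<gamma> * N' \<gamma> \<alpha>)) = (\<Sum>\<alpha>\<in>E. \<Sum>\<gamma>\<in>E. w \<gamma> * (N \<alpha> \<gamma> * N' \<gamma> \<alpha>))"
  proof (intro sum.cong refl)
    fix \<alpha> \<gamma> assume "\<alpha> \<in> E" "\<gamma> \<in> E"
    then show "w \<alpha> * (N \<alpha> \<gamma> * N' \<gamma> \<alpha>) = w \<gamma> * (N \<alpha> \<gamma> * N' \<gamma> \<alpha>)"
      using assms by (cases "N \<alpha> \<gamma> = 0") auto
  qed
  also have "\<dots> = (\<Sum>\<alpha>\<in>E. \<Sum>\<gamma>\<in>E. w \<alpha> * (N' \<alpha> \<gamma> * N \<gamma> \<alpha>))"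
    by (subst sum.swap) (simp add: mult.commute)
  finally show ?thesis
    by (simp add: matrix_bracket_def sum_distrib_left right_diff_distrib sum_subtractf)
qed

text \<open>Walk from u to v and give each step the weight \<plusminus>1, spread evenly over the class of arrows
  parallel to the one traversed; averaging over the class (which needs characteristic 0) keeps w
  constant on parallel classes.\<close>
lemma same_block_flow:
  fixes E :: "'a set" and s t :: "'a \<Rightarrow> 'v"
  assumes finite_E: "finite E" and "same_block E s t u v"
  shows "\<exists>w :: 'a \<Rightarrow> 'k::field_char_0. (\<forall>l. (\<Sum>\<alpha>\<in>E. w \<alpha> * (l (s \<alpha>) - l (t \<alpha>))) = l u - l v)
     \<and> (\<forall>\<alpha>\<in>E. \<forall>\<beta>\<in>E. s \<alpha> = s \<beta> \<and> t \<alpha> = t \<beta> \<longrightarrow> w \<alpha> = w \<beta>)"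
  using assms(2) unfolding same_block_def
proof (induction rule: rtrancl_induct)
  case base
  show ?case by (rule exI[of _ "\<lambda>_. 0"]) simp
next
  case (step v v')
  obtain w :: "'a \<Rightarrow> 'k" where flow: "\<And>l. (\<Sum>\<alpha>\<in>E. w \<alpha> * (l (s \<alpha>) - l (t \<alpha>))) = l u - l v"
    and parallel: "\<forall>\<alpha>\<in>E. \<forall>\<beta>\<in>E. s \<alpha> = s \<beta> \<and> t \<alpha> = t \<beta> \<longrightarrow> w \<alpha> = w \<beta>"
    using step.IH by blast
  obtain \<alpha> and \<epsilon> :: 'k where \<alpha>: "\<alpha> \<in> E" and step_weight: "\<And>l. \<epsilon> * (l (s \<alpha>) - l (t \<alpha>)) = l v - l v'"
  proof -
    from step.hyps(2) consider \<alpha> where "\<alpha> \<in> E" "v = s \<alpha>" "v' = t \<alpha>"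
      | \<alpha> where "\<alpha> \<in> E" "v = t \<alpha>" "v' = s \<alpha>"
      by blast
    then show ?thesis
    proof cases
      case 1
      then show ?thesis using that[of \<alpha> 1] by simp
    next
      case 2
      then show ?thesis using that[of \<alpha> "-1"] by simp
    qed
  qed
  define P where "P = {\<beta>\<in>E. s \<beta> = s \<alpha> \<and> t \<beta> = t \<alpha>}"
  have "finite P" "card P > 0" using finite_E \<alpha> unfolding P_def by (auto simp: card_gt_0_iff)
  define w' where "w' = (\<lambda>\<beta>. w \<beta> + (if \<beta> \<in> P then \<epsilon> / of_nat (card P) else 0))"
  have "(\<Sum>\<beta>\<in>E. w' \<beta> * (l (s \<beta>) - l (t \<beta>))) = l u - l v'" for l
  proof -
    have "(\<Sum>\<beta>\<in>E. w' \<beta> * (l (s \<beta>) - l (t \<beta>))) = (\<Sum>\<beta>\<in>E. w \<beta> * (l (s \<beta>) - l (t \<beta>)))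
        + (\<Sum>\<beta>\<in>E. if \<beta> \<in> P then \<epsilon> / of_nat (card P) * (l (s \<beta>) - l (t \<beta>)) else 0)"
      unfolding w'_def sum.distrib[symmetric] by (intro sum.cong refl) (simp add: distrib_right)
    also have "(\<Sum>\<beta>\<in>E. if \<beta> \<in> P then \<epsilon> / of_nat (card P) * (l (s \<beta>) - l (t \<beta>)) else 0)
        = (\<Sum>\<beta>\<in>P. \<epsilon> / of_nat (card P) * (l (s \<alpha>) - l (t \<alpha>)))"
      unfolding sum.inter_filter[OF finite_E, symmetric] P_def by (intro sum.cong) auto
    also have "\<dots> = \<epsilon> * (l (s \<alpha>) - l (t \<alpha>))" using \<open>card P > 0\<close> by simp
    finally show ?thesis using flow[of l] step_weight[of l] by simp
  qed
  moreover have "w' \<alpha>' = w' \<beta>'" if "\<alpha>' \<in> E" "\<beta>' \<in> E" "s \<alpha>' = s \<beta>' \<and> t \<alpha>' = t \<beta>'" for \<alpha>' \<beta>'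
  proof -
    have "\<alpha>' \<in> P \<longleftrightarrow> \<beta>' \<in> P" using that unfolding P_def by auto
    moreover have "w \<alpha>' = w \<beta>'" using parallel that by blast
    ultimately show ?thesis unfolding w'_def by simp
  qed
  ultimately show ?case by blast
qed

text \<open>If \<alpha>, \<beta> become parallel only after gluing, then (\<alpha>, \<beta>) is a special pair, and the basis
  vector \<alpha>*||\<beta>* lies in Ker \<delta>^1_B: substituting an arrow into a path of length 2 never yields
  a vertex or an arrow.\<close>
lemma Zspp_zero_glue_parallel_imp_parallel:
  fixes V :: "'v set" and E :: "'a set" and s t :: "'a \<Rightarrow> 'v"
  assumes Z: "Zspp_zero TYPE('k::field) V E s t v1 vn" and \<alpha>: "\<alpha> \<in> E" and \<beta>: "\<beta> \<in> E"
    and glued_source: "glue v1 vn (s \<alpha>) = glue v1 vn (s \<beta>)"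
    and glued_target: "glue v1 vn (t \<alpha>) = glue v1 vn (t \<beta>)"
  shows "s \<alpha> = s \<beta> \<and> t \<alpha> = t \<beta>"
proof (rule ccontr)
  assume not_parallel: "\<not> (s \<alpha> = s \<beta> \<and> t \<alpha> = t \<beta>)"
  then have "s \<alpha> \<in> {v1, vn} \<or> t \<alpha> \<in> {v1, vn}"
    using glued_source glued_target unfolding glue_def by (auto split: if_splits)
  then have special: "special_pair V E s t v1 vn \<alpha> (arr_path s \<beta>)"
    unfolding special_pair_def using \<alpha> \<beta> not_parallel glued_source glued_target
    by (auto simp: rsz_basis_def parallel_def glue_path_def arr_path_def path_tgt_def)
  define x0 where "x0 = (glue_path v1 vn (arr_path s \<alpha>), glue_path v1 vn (arr_path s \<beta>))"
  define f :: "('v,'a) path \<times> ('v,'a) path \<Rightarrow> 'k" where "f = (\<lambda>x. if x = x0 then 1 else 0)"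
  have no_subst: "subst_coeff (V - {vn}) E (glue v1 vn \<circ> s) r (fst x0) (snd x0) p = 0"
    if "r \<in> paths2 E (glue v1 vn \<circ> s) (glue v1 vn \<circ> t)" for r p
  proof -
    have "length (snd r) = 2" using that unfolding paths2_def by auto
    moreover have "length (snd p) \<le> 1" if "p \<in> rsz_basis (V - {vn}) E (glue v1 vn \<circ> s)"
      using that unfolding rsz_basis_def arr_path_def by auto
    ultimately show ?thesis
      unfolding subst_coeff_def x0_def by (force simp: glue_path_def arr_path_def)
  qed
  have "delta1 (V - {vn}) E (glue v1 vn \<circ> s) (glue v1 vn \<circ> t) f (r, p) = 0"
    if "r \<in> paths2 E (glue v1 vn \<circ> s) (glue v1 vn \<circ> t)" for r p
  proof -
    have "f x * of_nat (subst_coeff (V - {vn}) E (glue v1 vn \<circ> s) r (fst x) (snd x) p) = 0" for x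
      using no_subst[OF that] by (cases "x = x0") (simp_all add: f_def)
    then show ?thesis unfolding delta1_def case_prod_unfold by (intro sum.neutral ballI) simp
  qed
  moreover
  let ?SPP = "{(glue_path v1 vn (arr_path s \<alpha>), glue_path v1 vn p) | \<alpha> p.
    special_pair V E s t v1 vn \<alpha> p}"
  have "x0 \<in> ?SPP" unfolding x0_def using special by blast
  then have "f x = 0" if "x \<notin> ?SPP" for x
    using that unfolding f_def by auto
  ultimately have "f x0 = 0" using Z unfolding Zspp_zero_def Let_def by blast
  then show False unfolding f_def by simp
qed

locale rsz_gluing = rsz_quiver V E s t
  for V :: "'v set" and E :: "'a set" and s t :: "'a \<Rightarrow> 'v" +
  fixes v1 vn :: 'v and w :: "'a \<Rightarrow> 'k::field_char_0"
  assumes v1_in_V: "v1 \<in> V" and v1_neq_vn: "v1 \<noteq> vn"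
    and glue_parallel_imp_parallel: "\<And>\<alpha> \<beta>. \<alpha> \<in> E \<Longrightarrow> \<beta> \<in> E \<Longrightarrow>
      glue v1 vn (s \<alpha>) = glue v1 vn (s \<beta>) \<Longrightarrow> glue v1 vn (t \<alpha>) = glue v1 vn (t \<beta>) \<Longrightarrow>
      s \<alpha> = s \<beta> \<and> t \<alpha> = t \<beta>"
    and flow: "\<And>l. (\<Sum>\<alpha>\<in>E. w \<alpha> * (l (s \<alpha>) - l (t \<alpha>))) = l v1 - l vn"
    and flow_parallel: "\<And>\<alpha> \<beta>. \<alpha> \<in> E \<Longrightarrow> \<beta> \<in> E \<Longrightarrow> s \<alpha> = s \<beta> \<Longrightarrow> t \<alpha> = t \<beta> \<Longrightarrow> w \<alpha> = w \<beta>"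
begin

abbreviation sB :: "'a \<Rightarrow> 'v" where "sB \<equiv> glue v1 vn \<circ> s"
abbreviation tB :: "'a \<Rightarrow> 'v" where "tB \<equiv> glue v1 vn \<circ> t"

sublocale B: rsz_quiver "V - {vn}" E sB tB
  by unfold_locales
    (use quiver v1_in_V v1_neq_vn in \<open>auto simp: is_quiver_def glue_def\<close>)

definition lift_der :: "('v,'a,'k) endo \<Rightarrow> ('v,'a,'k) endo" where
  "lift_der D = arrow_der V E s (arrow_block sB D)"

definition flow_trace :: "('v,'a,'k) endo \<Rightarrow> 'k" where
  "flow_trace D = (\<Sum>\<alpha>\<in>E. w \<alpha> * arrow_block sB D \<alpha> \<alpha>)"

lemma glue_v1[simp]: "glue v1 vn v1 = v1" and glue_vn[simp]: "glue v1 vn vn = v1"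
  using v1_neq_vn by (simp_all add: glue_def)

lemma glued_arrow_block_nonzero_imp_parallel:
  assumes "D \<in> Der (V - {vn}) E sB tB K" "\<alpha> \<in> E" "\<beta> \<in> E" "arrow_block sB D \<alpha> \<beta> \<noteq> 0"
  shows "s \<alpha> = s \<beta> \<and> t \<alpha> = t \<beta>"
  using B.arrow_block_nonzero_imp_parallel[OF assms]
  by (intro glue_parallel_imp_parallel[OF assms(2,3)]) simp_all

lemma arrow_block_lift_der:
  "\<alpha> \<in> E \<Longrightarrow> \<beta> \<in> E \<Longrightarrow> arrow_block s (lift_der D) \<alpha> \<beta> = arrow_block sB D \<alpha> \<beta>"
  unfolding lift_der_def by (rule arrow_block_arrow_der)

lemma lift_der_Der: "D \<in> Der (V - {vn}) E sB tB K \<Longrightarrow> lift_der D \<in> Der V E s t K'"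
  unfolding lift_der_def by (rule arrow_der_Der) (rule glued_arrow_block_nonzero_imp_parallel)

lemma lift_der_dadd: "lift_der (dadd D D') = dadd (lift_der D) (lift_der D')"
  and flow_trace_dadd: "flow_trace (dadd D D') = flow_trace D + flow_trace D'"
  unfolding lift_der_def flow_trace_def arrow_block_dadd arrow_der_dadd
  by (simp_all add: distrib_left sum.distrib)

lemma lift_der_dsmult: "lift_der (dsmult r D) = dsmult r (lift_der D)"
  and flow_trace_dsmult: "flow_trace (dsmult r D) = r * flow_trace D"
  unfolding lift_der_def flow_trace_def arrow_block_dsmult arrow_der_dsmult
  by (simp_all add: sum_distrib_left mult.left_commute)

lemma flow_trace_coboundary:
  "(\<And>\<alpha>. \<alpha> \<in> E \<Longrightarrow> arrow_block sB D \<alpha> \<alpha> = coboundary_matrix s t l \<alpha> \<alpha>) \<Longrightarrow> flow_trace D = l v1 - l vn"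
  unfolding flow_trace_def flow[symmetric] by (simp add: coboundary_matrix_def)

lemma lift_der_Inn:
  assumes "D \<in> Inn (V - {vn}) E sB tB K"
  shows "lift_der D \<in> Inn V E s t K'" and "flow_trace D = 0"
proof -
  obtain a where a: "a \<in> rsz_carrier (V - {vn}) E sB" "D = inner_der (V - {vn}) E sB tB a"
    using assms unfolding Inn_iff by blast
  define l where "l = (\<lambda>v. a (glue v1 vn v, []))"
  have block: "arrow_block sB D \<alpha> \<beta> = coboundary_matrix s t l \<alpha> \<beta>" if "\<alpha> \<in> E" "\<beta> \<in> E" for \<alpha> \<beta>
    using B.arrow_block_inner_der[OF that, of a] unfolding a(2) l_def coboundary_matrix_def by simp
  have "lift_der D = inner_der V E s t (vertex_elem V l)"
    unfolding lift_der_def arrow_der_coboundary[symmetric] by (rule arrow_der_cong) (simp add: block)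
  then show "lift_der D \<in> Inn V E s t K'" by (simp add: inner_der_Inn)
  show "flow_trace D = 0" using flow_trace_coboundary[of D l] block by (simp add: l_def)
qed

lemma Inn_if_lift_der_Inn:
  assumes D: "D \<in> Der (V - {vn}) E sB tB K"
    and lift: "lift_der D \<in> Inn V E s t K'" and trace: "flow_trace D = 0"
  shows "D \<in> Inn (V - {vn}) E sB tB K"
proof -
  obtain a where a: "a \<in> rsz_carrier V E s" "lift_der D = inner_der V E s t a"
    using lift unfolding Inn_iff by blast
  define l where "l = (\<lambda>v. a (v, []))"
  have block: "arrow_block sB D \<alpha> \<beta> = coboundary_matrix s t l \<alpha> \<beta>" if "\<alpha> \<in> E" "\<beta> \<in> E" for \<alpha> \<beta>
    using arrow_block_lift_der[OF that, of D] arrow_block_inner_der[OF that, of a]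
    unfolding a(2) l_def by simp
  have "l vn = l v1" using flow_trace_coboundary[of D l] block trace by simp
  then have "coboundary_matrix s t l = coboundary_matrix sB tB l"
    by (auto simp: fun_eq_iff coboundary_matrix_def glue_def)
  then have "arrow_der (V - {vn}) E sB (arrow_block sB D)
      = inner_der (V - {vn}) E sB tB (vertex_elem (V - {vn}) l)"
    unfolding B.arrow_der_coboundary[symmetric] by (intro B.arrow_der_cong) (simp add: block)
  then have "D = inner_der (V - {vn}) E sB tB (vadd (vertex_elem (V - {vn}) l) (B.inner_part D))"
    using B.Der_decomposition[OF D] by (simp add: B.inner_der_vadd)
  then show ?thesis
    unfolding Inn_iff by (blast intro: B.vadd_carrier B.vertex_elem_carrier B.inner_part_carrier)
qed

text \<open>Correct the arrow block of E' by a multiple of the inner derivation [e_{v1}, -], which is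
  invisible in HH^1(A) but has flow trace 1.\<close>
lemma lift_der_surj:
  assumes E': "E' \<in> Der V E s t K'"
  shows "\<exists>D\<in>Der (V - {vn}) E sB tB K. dsub (lift_der D) E' \<in> Inn V E s t K' \<and> flow_trace D = c"
proof -
  define M where "M = arrow_block s E'"
  define \<chi> where "\<chi> = (\<lambda>v. if v = v1 then (1::'k) else 0)"
  define P where "P = coboundary_matrix s t \<chi>"
  define r where "r = (\<Sum>\<alpha>\<in>E. w \<alpha> * M \<alpha> \<alpha>) - c"
  define N where "N = (\<lambda>\<alpha> \<beta>. M \<alpha> \<beta> - r * P \<alpha> \<beta>)"
  define D where "D = arrow_der (V - {vn}) E sB N"
  have "N \<alpha> \<beta> \<noteq> 0 \<Longrightarrow> sB \<alpha> = sB \<beta> \<and> tB \<alpha> = tB \<beta>" if "\<alpha> \<in> E" "\<beta> \<in> E" for \<alpha> \<beta>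
    using arrow_block_nonzero_imp_parallel[OF E' that]
    by (cases "\<alpha> = \<beta>") (auto simp: N_def P_def M_def coboundary_matrix_def)
  then have D: "D \<in> Der (V - {vn}) E sB tB K" unfolding D_def by (intro B.arrow_der_Der)
  have block: "arrow_block sB D \<alpha> \<beta> = N \<alpha> \<beta>" if "\<alpha> \<in> E" "\<beta> \<in> E" for \<alpha> \<beta>
    unfolding D_def by (rule B.arrow_block_arrow_der[OF that])
  have "flow_trace D = (\<Sum>\<alpha>\<in>E. w \<alpha> * M \<alpha> \<alpha>) - r * (\<Sum>\<alpha>\<in>E. w \<alpha> * P \<alpha> \<alpha>)"
    unfolding flow_trace_def
    by (simp add: block N_def right_diff_distrib sum_subtractf sum_distrib_left mult.left_commute)
  also have "(\<Sum>\<alpha>\<in>E. w \<alpha> * P \<alpha> \<alpha>) = 1"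
    using flow[of \<chi>] v1_neq_vn unfolding P_def \<chi>_def coboundary_matrix_def by simp
  finally have "flow_trace D = c" unfolding r_def by simp
  obtain a where a: "a \<in> rsz_carrier V E s" "E' = dadd (arrow_der V E s M) (inner_der V E s t a)"
    using Der_decomposition[OF E'] inner_part_carrier unfolding M_def by blast
  have "lift_der D = arrow_der V E s N"
    unfolding lift_der_def by (rule arrow_der_cong) (simp add: block)
  also have "\<dots> = dsub (arrow_der V E s M) (dsmult r (inner_der V E s t (vertex_elem V \<chi>)))"
    unfolding N_def P_def arrow_der_coboundary[symmetric] arrow_der_dsmult[symmetric]
    by (rule arrow_der_dsub)
  finally have "dsub (lift_der D) E'
      = inner_der V E s t (vadd (vsmult (- r) (vertex_elem V \<chi>)) (vsmult (- 1) a))"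
    unfolding a(2) inner_der_vadd inner_der_vsmult
    by (simp add: fun_eq_iff dsub_def dadd_def dsmult_def algebra_simps)
  moreover have "vadd (vsmult (- r) (vertex_elem V \<chi>)) (vsmult (- 1) a) \<in> rsz_carrier V E s"
    using a(1) by simp
  ultimately show ?thesis
    using D \<open>flow_trace D = c\<close> inner_der_Inn by metis
qed

lemma lift_der_dbracket:
  assumes "D \<in> Der (V - {vn}) E sB tB K" "D' \<in> Der (V - {vn}) E sB tB K"
  shows "lift_der (dbracket D D') = dbracket (lift_der D) (lift_der D')"
  unfolding lift_der_def dbracket_arrow_der
  by (rule arrow_der_cong) (simp add: B.arrow_block_dbracket[OF assms])

lemma flow_trace_dbracket:
  assumes "D \<in> Der (V - {vn}) E sB tB K" and D': "D' \<in> Der (V - {vn}) E sB tB K"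
  shows "flow_trace (dbracket D D') = 0"
proof -
  have "flow_trace (dbracket D D')
      = (\<Sum>\<alpha>\<in>E. w \<alpha> * matrix_bracket E (arrow_block sB D') (arrow_block sB D) \<alpha> \<alpha>)"
    unfolding flow_trace_def by (simp add: B.arrow_block_dbracket[OF assms])
  also have "\<dots> = 0"
    using glued_arrow_block_nonzero_imp_parallel[OF D'] flow_parallel
    by (intro weighted_trace_matrix_bracket) blast
  finally show ?thesis .
qed

end

theorem corollary3p28:
  fixes V :: "'v set" and E :: "'a set" and s t :: "'a \<Rightarrow> 'v" and v1 vn :: 'v
  assumes "is_quiver V E s t"
    and "v1 \<in> V" and "vn \<in> V" and "v1 \<noteq> vn"
    and "non_isolated E s t v1" and "non_isolated E s t vn"
    and "same_block E s t v1 vn"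
    and "Zspp_zero TYPE('k::field_char_0) V E s t v1 vn"
  shows "HH1_iso_times_field (V - {vn}) E (glue v1 vn \<circ> s) (glue v1 vn \<circ> t) V E s t TYPE('k)"
proof -
  interpret rsz_quiver V E s t by unfold_locales fact
  obtain w :: "'a \<Rightarrow> 'k" where "\<forall>l. (\<Sum>\<alpha>\<in>E. w \<alpha> * (l (s \<alpha>) - l (t \<alpha>))) = l v1 - l vn"
    and "\<forall>\<alpha>\<in>E. \<forall>\<beta>\<in>E. s \<alpha> = s \<beta> \<and> t \<alpha> = t \<beta> \<longrightarrow> w \<alpha> = w \<beta>"
    using same_block_flow[OF finite_E assms(7)] by blast
  then interpret rsz_gluing V E s t v1 vn w
    by unfold_locales (use assms(2,4) Zspp_zero_glue_parallel_imp_parallel[OF assms(8)] in blast)+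
  show ?thesis
    unfolding HH1_iso_times_field_def
  proof (intro exI[of _ lift_der] exI[of _ flow_trace] conjI ballI allI)
    show "lift_der D \<in> Inn V E s t TYPE('k) \<and> flow_trace D = 0
        \<longleftrightarrow> D \<in> Inn (V - {vn}) E sB tB TYPE('k)"
      if "D \<in> Der (V - {vn}) E sB tB TYPE('k)" for D
      using that lift_der_Inn Inn_if_lift_der_Inn by blast
    show "dsub (lift_der (dbracket D D')) (dbracket (lift_der D) (lift_der D'))
        \<in> Inn V E s t TYPE('k)"
      if "D \<in> Der (V - {vn}) E sB tB TYPE('k)" "D' \<in> Der (V - {vn}) E sB tB TYPE('k)" for D D'
      using zero_der_Inn by (simp add: lift_der_dbracket[OF that] dsub_def)
  qed (simp_all add: lift_der_Der lift_der_dadd flow_trace_dadd lift_der_dsmult flow_trace_dsmult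
      lift_der_surj flow_trace_dbracket)
qed

end
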